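(* For integers $a\geq1$ and $n\geq1$ let $f_{2n+1}(a)=\sum_{k=-(a-1)}^{a-1}\big(1-\frac{k^2}{a^2}\big)^{n}$. Then: (i) for every integer $a\geq1$, $f_3(a)=\frac{4a}{3}-\frac{1}{3a}$; (ii) for every $n\geq2$, as $a\to\infty$ ($a$ integer), $$f_{2n+1}(a)=\frac{2^{2n+1}(n!)^2}{(2n+1)!}\,a+o(a^{-2});$$ (iii) for every $n\geq2$, with $m=2n+1$, $p_k=f_{m}(a)^{-1}(1-k^2/a^2)^{n}$ for $|k|\leq a-1$ (and $p_k=0$ otherwise) and $U(a)=\sum_k k^2p_k$, one has, as $a\to\infty$, $$U(a)=\frac{a^2}{m+2}+o(a^{-1}).$$
   Context: $f_m(a)$ is the partition function of the discrete Tsallis maximizer with $q>1$, written with $m=\frac{q+1}{q-1}$ (so the exponent is $\frac{m-1}{2}=n$) and $a^2=k_BT$; $U$ is the mean energy (variance). *)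

theory Defs
  imports "HOL-Analysis.Analysis" "HOL-Library.Landau_Symbols"
begin

definition tsallis_f :: "nat \<Rightarrow> nat \<Rightarrow> real" where
  "tsallis_f n a = (\<Sum>k\<in>{-(int a - 1)..int a - 1}. (1 - (real_of_int k)^2 / (real a)^2) ^ n)"

definition tsallis_p :: "nat \<Rightarrow> nat \<Rightarrow> int \<Rightarrow> real" where
  "tsallis_p n a k = (if \<bar>k\<bar> \<le> int a - 1
      then (1 - (real_of_int k)^2 / (real a)^2) ^ n / tsallis_f n a else 0)"

definition tsallis_U :: "nat \<Rightarrow> nat \<Rightarrow> real" where
  "tsallis_U n a = (\<Sum>k\<in>{-(int a - 1)..int a - 1}. (real_of_int k)^2 * tsallis_p n a k)"

end

theory Submission
  imports Defs "HOL-Real_Asymp.Real_Asymp"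
begin

text \<open>Expanding \<open>(1 - x\<^sup>2) ^ n\<close> binomially turns the lattice moments
  \<open>M\<^sub>r(a) = \<Sum>\<bar>k\<bar>\<le>a. (k/a) ^ (2r) (1 - (k/a)\<^sup>2) ^ n\<close> into alternating combinations of the
  normalised power sums \<open>\<Sum>\<bar>k\<bar>\<le>a. (k/a) ^ (2j) = 2a/(2j+1) + 1 + j/(3a) + O(a\<^sup>-\<^sup>3)\<close>,
  which is Faulhaber's formula. Since \<open>\<Sum>\<^sub>i (-1) ^ i (n choose i) = 0\<close> and, for \<open>n \<ge> 2\<close>,
  \<open>\<Sum>\<^sub>i (-1) ^ i i (n choose i) = 0\<close>, the terms of order 1 and \<open>1/a\<close> cancel and
  \<open>M\<^sub>r(a) = 2a I\<^sub>r + O(a\<^sup>-\<^sup>3)\<close> with \<open>I\<^sub>r = \<integral>\<^sub>0\<^sup>1 x ^ (2r) (1 - x\<^sup>2) ^ n dx\<close>.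
  Integration by parts gives \<open>(2n+3) I\<^sub>0(n+1) = (2n+2) I\<^sub>0(n)\<close> and \<open>I\<^sub>1 = I\<^sub>0/(2n+3)\<close>, hence the
  constant of (ii); and \<open>U = a\<^sup>2 M\<^sub>1 / M\<^sub>0\<close> with \<open>M\<^sub>0 \<sim> 2 I\<^sub>0 a\<close> gives (iii).
  For \<open>n = 1\<close> all sums are exact.\<close>

section \<open>Power sums\<close>

definition power_sum :: "nat \<Rightarrow> nat \<Rightarrow> real" where
  "power_sum p a = (\<Sum>k=1..a. real k ^ p)"

lemma power_sum_Suc: "power_sum p (Suc a) = power_sum p a + real (Suc a) ^ p"
  by (simp add: power_sum_def)

lemma power_sum_two: "power_sum 2 a = real a ^ 3 / 3 + real a ^ 2 / 2 + real a / 6"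
  by (induction a) (simp_all add: power_sum_def power_sum_Suc field_simps power2_eq_square power3_eq_cube)

lemma binomial_head_error:
  fixes x :: real
  assumes "x \<ge> 1" and "r \<le> m"
  shows "\<bar>(x - 1) ^ m - (\<Sum>j<r. real (m choose j) * (-1) ^ j * x ^ (m - j))\<bar> \<le> 2 ^ m * x ^ (m - r)"
proof -
  define t where "t j = real (m choose j) * (-1) ^ j * x ^ (m - j)" for j
  have "(x - 1) ^ m = (\<Sum>j\<le>m. t j)"
    using binomial_ring[of "-1" x m] by (simp add: t_def mult_ac)
  also have "\<dots> = (\<Sum>j<r. t j) + (\<Sum>j\<in>{r..m}. t j)"
    using assms(2) by (subst sum.union_disjoint [symmetric]) (auto intro: sum.cong)
  finally have "\<bar>(x - 1) ^ m - (\<Sum>j<r. t j)\<bar> \<le> (\<Sum>j\<in>{r..m}. \<bar>t j\<bar>)"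
    by simp
  also have "\<dots> \<le> (\<Sum>j\<le>m. real (m choose j) * x ^ (m - r))"
  proof (rule sum_mono2[THEN order_trans[rotated]])
    show "(\<Sum>j\<in>{r..m}. \<bar>t j\<bar>) \<le> (\<Sum>j\<in>{r..m}. real (m choose j) * x ^ (m - r))"
      using assms by (intro sum_mono) (auto simp: t_def abs_mult intro!: mult_left_mono power_increasing)
  qed (use assms in auto)
  also have "\<dots> = 2 ^ m * x ^ (m - r)"
    by (simp flip: sum_distrib_right of_nat_sum add: choose_row_sum)
  finally show ?thesis by (simp add: t_def)
qed

lemma of_nat_choose_2: "real (m choose 2) = real m * (real m - 1) / 2"
  and of_nat_choose_3: "real (m choose 3) = real m * (real m - 1) * (real m - 2) / 6"
  and of_nat_choose_4: "real (m choose 4) = real m * (real m - 1) * (real m - 2) * (real m - 3) / 24"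
  by (simp_all add: binomial_gbinomial gbinomial_prod_rev numeral_eq_Suc prod.atLeast0_lessThan_Suc)

text \<open>The first three terms of Faulhaber's formula for \<open>\<Sum>k=1..a. k ^ p\<close>. The next term, of
  order \<open>x ^ (p - 3)\<close>, vanishes because the Bernoulli number \<open>B\<^sub>3\<close> is zero, so the error is
  \<open>O(x ^ (p - 3))\<close>.\<close>
definition power_sum_approx :: "nat \<Rightarrow> real \<Rightarrow> real" where
  "power_sum_approx p x = x ^ (p + 1) / (p + 1) + x ^ p / 2 + p * x ^ (p - 1) / 12"

lemma power_sum_approx_step:
  fixes x :: real
  assumes "x \<ge> 1" and "p \<ge> 4"
  shows "\<bar>power_sum_approx p x - power_sum_approx p (x - 1) - x ^ p\<bar> \<le> (real p + 2) * 2 ^ (p + 1) * x ^ (p - 4)"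
proof -
  define head where "head m r = (\<Sum>j<r. real (m choose j) * (-1) ^ j * x ^ (m - j))" for m r
  define err where "err m r = (x - 1) ^ m - head m r" for m r
  obtain q where q: "p = q + 4" using assms(2) by (metis add.commute le_Suc_ex)
  have head_cancel: "power_sum_approx p x - x ^ p
      = head (p + 1) 5 / (p + 1) + head p 4 / 2 + p * head (p - 1) 3 / 12"
    unfolding head_def power_sum_approx_def q
    by (simp add: lessThan_nat_numeral of_nat_choose_2 of_nat_choose_3 of_nat_choose_4
        power_add field_simps)
  define B where "B = 2 ^ (p + 1) * x ^ (p - 4)"
  have err_bound: "\<bar>err m r\<bar> \<le> B" if "r \<le> m" "m \<le> p + 1" "m - r = p - 4" for m r
  proof -
    have "\<bar>err m r\<bar> \<le> 2 ^ m * x ^ (m - r)"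
      unfolding err_def head_def using assms(1) that(1) by (rule binomial_head_error)
    also have "\<dots> \<le> B"
      unfolding B_def using assms(1) that(2,3)
      by (simp add: mult_right_mono power_increasing del: power_Suc)
    finally show ?thesis .
  qed
  have "power_sum_approx p (x - 1) = (head (p + 1) 5 + err (p + 1) 5) / (p + 1)
      + (head p 4 + err p 4) / 2 + p * (head (p - 1) 3 + err (p - 1) 3) / 12"
    by (simp add: power_sum_approx_def err_def)
  then have "power_sum_approx p x - power_sum_approx p (x - 1) - x ^ p
      = - (err (p + 1) 5 / (p + 1) + err p 4 / 2 + p * err (p - 1) 3 / 12)"
    using head_cancel by (simp add: add_divide_distrib distrib_left)
  also have "\<bar>\<dots>\<bar> \<le> B + B + p * B"
  proof -
    have "\<bar>err (p + 1) 5\<bar> \<le> B" "\<bar>err p 4\<bar> \<le> B" "\<bar>err (p - 1) 3\<bar> \<le> B"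
      using err_bound[of 5 "p + 1"] err_bound[of 4 p] err_bound[of 3 "p - 1"] assms(2) by simp_all
    moreover have "\<bar>err (p + 1) 5 / (p + 1)\<bar> \<le> \<bar>err (p + 1) 5\<bar>"
      by (simp add: divide_le_eq mult_le_cancel_left1)
    moreover have "\<bar>p * err (p - 1) 3 / 12\<bar> \<le> p * \<bar>err (p - 1) 3\<bar>"
      by (simp add: abs_mult)
    moreover have "p * \<bar>err (p - 1) 3\<bar> \<le> p * B"
      using \<open>\<bar>err (p - 1) 3\<bar> \<le> B\<close> by (simp add: mult_left_mono)
    ultimately show ?thesis
      by arith
  qed
  finally show ?thesis by (simp add: B_def algebra_simps)
qed

lemma power_sum_approx_error:
  assumes "p \<ge> 4"
  shows "\<bar>power_sum p a - power_sum_approx p a\<bar> \<le> (real p + 2) * 2 ^ (p + 1) * real a ^ (p - 3)"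
proof (induction a)
  case 0
  then show ?case using assms by (simp add: power_sum_def power_sum_approx_def power_0_left)
next
  case (Suc a)
  define C where "C = (real p + 2) * 2 ^ (p + 1)"
  define x where "x = real (Suc a)"
  have "x - 1 = real a" by (simp add: x_def)
  moreover have "\<bar>power_sum_approx p x - power_sum_approx p (x - 1) - x ^ p\<bar> \<le> C * x ^ (p - 4)"
    unfolding C_def by (rule power_sum_approx_step) (use assms in \<open>simp_all add: x_def\<close>)
  ultimately have step: "\<bar>power_sum_approx p x - power_sum_approx p a - x ^ p\<bar> \<le> C * x ^ (p - 4)"
    by simp
  have "power_sum p (Suc a) - power_sum_approx p x
      = (power_sum p a - power_sum_approx p a) - (power_sum_approx p x - power_sum_approx p a - x ^ p)"
    by (simp add: power_sum_Suc x_def)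
  then have "\<bar>power_sum p (Suc a) - power_sum_approx p x\<bar> \<le> C * real a ^ (p - 3) + C * x ^ (p - 4)"
    using Suc.IH step unfolding C_def by linarith
  also have "\<dots> \<le> C * x ^ (p - 3)"
  proof -
    obtain q where q: "p = q + 4" using assms by (metis add.commute le_Suc_ex)
    have "real a ^ q * real a \<le> x ^ q * real a"
      by (rule mult_right_mono) (simp_all add: x_def power_mono)
    then have "real a ^ (q + 1) + x ^ q \<le> x ^ (q + 1)"
      by (simp add: x_def algebra_simps)
    then have "C * (real a ^ (q + 1) + x ^ q) \<le> C * x ^ (q + 1)"
      by (rule mult_left_mono) (simp add: C_def)
    then show ?thesis
      unfolding q by (simp add: distrib_left)
  qed
  finally show ?case by (simp add: x_def C_def)
qed

lemma power_sum_approx_divide_power: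
  assumes "x > 0"
  shows "power_sum_approx p x / x ^ p = x / (p + 1) + 1 / 2 + p / (12 * x)"
  using assms by (cases p) (simp_all add: power_sum_approx_def add_divide_distrib)

lemma power_sum_asymptotics:
  assumes "p \<ge> 4"
  shows "(\<lambda>a. power_sum p a / real a ^ p - (real a / (real p + 1) + 1 / 2 + p / (12 * real a)))
    \<in> O(\<lambda>a. 1 / real a ^ 3)"
proof -
  have "eventually (\<lambda>a. norm (power_sum p a / real a ^ p - (real a / (real p + 1) + 1 / 2 + p / (12 * real a)))
      \<le> ((real p + 2) * 2 ^ (p + 1)) * norm (1 / real a ^ 3)) at_top"
    using eventually_gt_at_top[of 0]
  proof eventually_elim
    case (elim a)
    have "power_sum p a / real a ^ p - (real a / (real p + 1) + 1 / 2 + p / (12 * real a))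
        = (power_sum p a - power_sum_approx p a) / real a ^ p"
      using elim by (simp add: power_sum_approx_divide_power diff_divide_distrib)
    also have "\<bar>\<dots>\<bar> = \<bar>power_sum p a - power_sum_approx p a\<bar> / real a ^ p"
      by simp
    also have "\<dots> \<le> (real p + 2) * 2 ^ (p + 1) * real a ^ (p - 3) / real a ^ p"
      by (rule divide_right_mono[OF power_sum_approx_error[OF assms]]) simp
    also have "\<dots> = (real p + 2) * 2 ^ (p + 1) / real a ^ 3"
      using elim assms by (simp add: power_diff)
    finally show ?case by simp
  qed
  then show ?thesis by (rule bigoI)
qed

lemma sum_int_symmetric:
  fixes g :: "int \<Rightarrow> 'a::comm_semiring_1"
  assumes "\<And>k. g (- k) = g k"
  shows "(\<Sum>k\<in>{- int a..int a}. g k) = g 0 + 2 * (\<Sum>k=1..a. g (int k))"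
proof (induction a)
  case (Suc a)
  have "{- int (Suc a)..int (Suc a)} = insert (- int (Suc a)) (insert (int (Suc a)) {- int a..int a})"
    by auto
  then show ?case using Suc assms[of "int (Suc a)"] by (simp add: algebra_simps mult_2)
qed simp

lemma even_power_sum_asymptotics:
  "(\<lambda>a. (\<Sum>k\<in>{- int a..int a}. (of_int k / real a) ^ (2 * j))
      - (2 * real a / (2 * j + 1) + 1 + j / (3 * real a)))
    \<in> O(\<lambda>a. 1 / real a ^ 3)"
proof -
  have sym: "(\<Sum>k\<in>{- int a..int a}. (of_int k / real a) ^ (2 * j))
      = 0 ^ (2 * j) + 2 * (power_sum (2 * j) a / real a ^ (2 * j))" for a
    by (subst sum_int_symmetric) (simp_all add: power_sum_def power_divide sum_divide_distrib)
  show ?thesis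
  proof (cases "j = 0")
    case True
    then show ?thesis by (simp add: sym power_sum_def)
  next
    case False
    define R where "R a = power_sum (2 * j) a / real a ^ (2 * j)
      - (real a / (real (2 * j) + 1) + 1 / 2 + real (2 * j) / (12 * real a))" for a
    have R_bigo: "R \<in> O(\<lambda>a. 1 / real a ^ 3)"
    proof (cases "j = 1")
      case True
      have "eventually (\<lambda>a. R a = 0) at_top"
        using eventually_gt_at_top[of 0]
        unfolding R_def True mult_1_right power_sum_two
        by eventually_elim (simp add: field_simps power2_eq_square power3_eq_cube)
      from landau_o.big.in_cong[OF this] show ?thesis by simp
    next
      case False
      with \<open>j \<noteq> 0\<close> have "2 * j \<ge> 4" by simp
      then show ?thesis unfolding R_def by (rule power_sum_asymptotics)
    qed
    have eq: "eventually (\<lambda>a. (\<Sum>k\<in>{- int a..int a}. (of_int k / real a) ^ (2 * j))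
        - (2 * real a / (2 * real j + 1) + 1 + j / (3 * real a)) = 2 * R a) at_top"
      using eventually_gt_at_top[of 0] unfolding sym R_def
      by eventually_elim (simp add: False power_0_left algebra_simps)
    show ?thesis using landau_o.big.in_cong[OF eq] R_bigo by simp
  qed
qed

section \<open>Moments of the weight \<open>(1 - x\<^sup>2) ^ n\<close>\<close>

lemma one_minus_square_power:
  fixes x :: real
  shows "(1 - x ^ 2) ^ n = (\<Sum>i\<le>n. real (n choose i) * (-1) ^ i * x ^ (2 * i))"
proof -
  have "(1 - x ^ 2) ^ n = (\<Sum>i\<le>n. real (n choose i) * (- (x ^ 2)) ^ i * 1 ^ (n - i))"
    using binomial_ring[of "- (x ^ 2)" 1 n] by simp
  also have "\<dots> = (\<Sum>i\<le>n. real (n choose i) * (-1) ^ i * x ^ (2 * i))"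
  proof (rule sum.cong)
    fix i
    have "(- (x ^ 2)) ^ i = (-1) ^ i * x ^ (2 * i)"
      by (subst power_minus) (simp add: power_mult)
    then show "real (n choose i) * (- (x ^ 2)) ^ i * 1 ^ (n - i) = real (n choose i) * (-1) ^ i * x ^ (2 * i)"
      by simp
  qed simp
  finally show ?thesis .
qed

text \<open>An antiderivative of \<open>x ^ (2r) * (1 - x\<^sup>2) ^ n\<close> vanishing at 0, so \<open>moment_integral n r\<close>
  is the integral of this weight over \<open>[0, 1]\<close>.\<close>
definition moment_primitive :: "nat \<Rightarrow> nat \<Rightarrow> real \<Rightarrow> real" where
  "moment_primitive n r x =
    (\<Sum>i\<le>n. real (n choose i) * (-1) ^ i * x ^ (2 * i + 2 * r + 1) / real (2 * i + 2 * r + 1))"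

definition moment_integral :: "nat \<Rightarrow> nat \<Rightarrow> real" where
  "moment_integral n r = moment_primitive n r 1"

lemma moment_primitive_deriv:
  "(moment_primitive n r has_real_derivative x ^ (2 * r) * (1 - x ^ 2) ^ n) (at x)"
proof -
  have monomial: "((\<lambda>x. c * x ^ (m + 1) / real (m + 1)) has_real_derivative c * x ^ m) (at x)"
    for c :: real and m
    using DERIV_cdivide[OF DERIV_cmult[OF DERIV_pow[of "m + 1"]], of c "real (m + 1)"] by simp
  have "(moment_primitive n r has_real_derivative
      (\<Sum>i\<le>n. real (n choose i) * (-1) ^ i * x ^ (2 * i + 2 * r))) (at x)"
    unfolding moment_primitive_def by (rule DERIV_sum, rule monomial)
  also have "(\<Sum>i\<le>n. real (n choose i) * (-1) ^ i * x ^ (2 * i + 2 * r)) = x ^ (2 * r) * (1 - x ^ 2) ^ n"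
    unfolding one_minus_square_power sum_distrib_left by (rule sum.cong) (simp_all add: power_add)
  finally show ?thesis .
qed

lemma moment_primitive_at_0 [simp]: "moment_primitive n r 0 = 0"
  by (simp add: moment_primitive_def)

lemma moment_integral_Suc_left:
  "moment_integral (Suc n) r = moment_integral n r - moment_integral n (Suc r)"
proof -
  define F where "F x = moment_primitive (Suc n) r x - moment_primitive n r x + moment_primitive n (Suc r) x"
    for x
  have "(F has_real_derivative 0) (at x)" for x
  proof -
    have "(F has_real_derivative x ^ (2 * r) * (1 - x ^ 2) ^ Suc n - x ^ (2 * r) * (1 - x ^ 2) ^ n
        + x ^ (2 * Suc r) * (1 - x ^ 2) ^ n) (at x)"
      unfolding F_def by (intro DERIV_add DERIV_diff moment_primitive_deriv)
    then show ?thesis by (simp add: algebra_simps power2_eq_square)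
  qed
  then have "F 1 = F 0" using DERIV_isconst_all by blast
  then show ?thesis by (simp add: F_def moment_integral_def)
qed

lemma moment_integral_by_parts:
  "(2 * real r + 1) * moment_integral (Suc n) r = (2 * real n + 2) * moment_integral n (Suc r)"
proof -
  define F where "F x = (2 * r + 1) * moment_primitive (Suc n) r x - (2 * n + 2) * moment_primitive n (Suc r) x
    - x ^ (2 * r + 1) * (1 - x ^ 2) ^ Suc n" for x :: real
  have "(F has_real_derivative 0) (at x)" for x
  proof -
    have boundary: "((\<lambda>x. x ^ (2 * r + 1) * (1 - x ^ 2) ^ Suc n) has_real_derivative
        (2 * r + 1) * x ^ (2 * r) * (1 - x ^ 2) ^ Suc n - (2 * n + 2) * x ^ (2 * Suc r) * (1 - x ^ 2) ^ n) (at x)"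
    proof (rule DERIV_cong)
      have "((\<lambda>x. 1 - x ^ 2) has_real_derivative - (2 * x)) (at x)"
        by (auto intro!: derivative_eq_intros)
      from DERIV_mult[OF DERIV_pow[of "2 * r + 1"] DERIV_power[OF this, of "Suc n"]]
      show "((\<lambda>x. x ^ (2 * r + 1) * (1 - x ^ 2) ^ Suc n) has_real_derivative
          real (2 * r + 1) * x ^ (2 * r + 1 - Suc 0) * (1 - x ^ 2) ^ Suc n
          + real (Suc n) * (- (2 * x) * (1 - x ^ 2) ^ (Suc n - Suc 0)) * x ^ (2 * r + 1)) (at x)" .
    qed (simp add: algebra_simps)
    have "(F has_real_derivative (2 * r + 1) * (x ^ (2 * r) * (1 - x ^ 2) ^ Suc n)
        - (2 * n + 2) * (x ^ (2 * Suc r) * (1 - x ^ 2) ^ n)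
        - ((2 * r + 1) * x ^ (2 * r) * (1 - x ^ 2) ^ Suc n - (2 * n + 2) * x ^ (2 * Suc r) * (1 - x ^ 2) ^ n)) (at x)"
      unfolding F_def by (intro DERIV_diff DERIV_cmult moment_primitive_deriv boundary)
    then show ?thesis by simp
  qed
  then have "F 1 = F 0" using DERIV_isconst_all by blast
  then show ?thesis by (simp add: F_def moment_integral_def add.commute)
qed

lemma moment_integral_Suc_0:
  "(2 * real n + 3) * moment_integral (Suc n) 0 = (2 * real n + 2) * moment_integral n 0"
  using moment_integral_by_parts[of 0 n] moment_integral_Suc_left[of n 0] by (simp add: algebra_simps)

lemma moment_integral_0_times_fact:
  "2 * moment_integral n 0 * fact (2 * n + 1) = 2 ^ (2 * n + 1) * (fact n) ^ 2"
proof (induction n)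
  case 0
  then show ?case by (simp add: moment_integral_def moment_primitive_def)
next
  case (Suc n)
  have "2 * moment_integral (Suc n) 0 * fact (2 * Suc n + 1)
      = 2 * (2 * real n + 2) * ((2 * real n + 3) * moment_integral (Suc n) 0) * fact (2 * n + 1)"
    by (simp add: algebra_simps)
  also have "\<dots> = (2 * real n + 2) ^ 2 * (2 * moment_integral n 0 * fact (2 * n + 1))"
    by (simp only: moment_integral_Suc_0) (simp add: algebra_simps power2_eq_square)
  also have "\<dots> = 2 ^ (2 * Suc n + 1) * (fact (Suc n)) ^ 2"
    by (simp only: Suc.IH) (simp add: algebra_simps power2_eq_square)
  finally show ?case .
qed

lemma moment_integral_0_closed_form:
  "2 * moment_integral n 0 = 2 ^ (2 * n + 1) * (fact n) ^ 2 / fact (2 * n + 1)"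
  using moment_integral_0_times_fact[of n] by (simp add: eq_divide_eq)

lemma moment_integral_0_pos: "moment_integral n 0 > 0"
proof -
  have "2 * moment_integral n 0 > 0"
    unfolding moment_integral_0_closed_form by simp
  then show ?thesis by simp
qed

lemma moment_integral_1: "moment_integral n 1 = moment_integral n 0 / (2 * real n + 3)"
proof -
  have "(2 * real n + 3) * moment_integral n 1
      = (2 * real n + 3) * moment_integral n 0 - (2 * real n + 3) * moment_integral (Suc n) 0"
    using moment_integral_Suc_left[of n 0] by (simp add: right_diff_distrib)
  also have "\<dots> = moment_integral n 0"
    using moment_integral_Suc_0[of n] by (simp add: algebra_simps)
  finally show ?thesis by (simp add: field_simps)
qed

text \<open>Since \<open>0 ^ 0 = 1\<close>, the term \<open>k = 0\<close> contributes exactly when \<open>r = 0\<close>.\<close>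
definition lattice_moment :: "nat \<Rightarrow> nat \<Rightarrow> nat \<Rightarrow> real" where
  "lattice_moment n r a =
    (\<Sum>k\<in>{- int a..int a}. (of_int k / real a) ^ (2 * r) * (1 - (of_int k / real a) ^ 2) ^ n)"

lemma lattice_moment_expansion:
  "lattice_moment n r a = (\<Sum>i\<le>n. real (n choose i) * (-1) ^ i *
     (\<Sum>k\<in>{- int a..int a}. (of_int k / real a) ^ (2 * (i + r))))"
proof -
  have "lattice_moment n r a = (\<Sum>k\<in>{- int a..int a}. \<Sum>i\<le>n.
      real (n choose i) * (-1) ^ i * (of_int k / real a) ^ (2 * (i + r)))"
    unfolding lattice_moment_def one_minus_square_power sum_distrib_left
    by (intro sum.cong refl) (simp add: power_add mult_ac)
  also have "\<dots> = (\<Sum>i\<le>n. real (n choose i) * (-1) ^ i *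
      (\<Sum>k\<in>{- int a..int a}. (of_int k / real a) ^ (2 * (i + r))))"
    by (subst sum.swap) (simp add: sum_distrib_left)
  finally show ?thesis .
qed

lemma lattice_moment_asymptotics:
  assumes "n \<ge> 2"
  shows "(\<lambda>a. lattice_moment n r a - 2 * real a * moment_integral n r) \<in> O(\<lambda>a. 1 / real a ^ 3)"
proof -
  define c where "c i = real (n choose i) * (-1) ^ i" for i
  define E where "E j a = (\<Sum>k\<in>{- int a..int a}. (of_int k / real a) ^ (2 * j))
    - (2 * real a / (2 * real j + 1) + 1 + real j / (3 * real a))" for j a
  have alternating: "(\<Sum>i\<le>n. c i * (1 + real (i + r) / (3 * real a))) = 0" for a
  proof -
    have "(\<Sum>i\<le>n. c i) = 0"
      using choose_alternating_sum[of n, where 'a = real] assms by (simp add: c_def mult.commute)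
    moreover have "(\<Sum>i\<le>n. c i * real i) = 0"
      using choose_alternating_linear_sum[of n, where 'a = real] assms by (simp add: c_def mult_ac)
    moreover have "(\<Sum>i\<le>n. c i * (1 + real (i + r) / (3 * real a)))
        = (\<Sum>i\<le>n. c i) * (1 + r / (3 * real a)) + (\<Sum>i\<le>n. c i * real i) * (1 / (3 * real a))"
      unfolding sum_distrib_right sum.distrib [symmetric]
      by (intro sum.cong refl) (simp add: add_divide_distrib algebra_simps)
    ultimately show ?thesis by simp
  qed
  have "lattice_moment n r a - 2 * real a * moment_integral n r = (\<Sum>i\<le>n. c i * E (i + r) a)" for a
  proof -
    have "lattice_moment n r a = (\<Sum>i\<le>n. c i * E (i + r) a + c i * (2 * real a / (2 * real (i + r) + 1))
        + c i * (1 + real (i + r) / (3 * real a)))"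
      unfolding lattice_moment_expansion E_def c_def by (intro sum.cong refl) (simp add: algebra_simps)
    also have "\<dots> = (\<Sum>i\<le>n. c i * E (i + r) a) + 2 * real a * moment_integral n r"
    proof -
      have "2 * real a * moment_integral n r = (\<Sum>i\<le>n. c i * (2 * real a / (2 * real (i + r) + 1)))"
        unfolding moment_integral_def moment_primitive_def sum_distrib_left
        by (intro sum.cong refl) (simp add: c_def algebra_simps)
      then show ?thesis using alternating[of a] by (simp add: sum.distrib)
    qed
    finally show ?thesis by simp
  qed
  moreover have "(\<lambda>a. \<Sum>i\<le>n. c i * E (i + r) a) \<in> O(\<lambda>a. 1 / real a ^ 3)"
  proof (rule big_sum_in_bigo)
    fix i assume "i \<in> {..n}"
    then have "c i \<noteq> 0" by (simp add: c_def)
    then show "(\<lambda>a. c i * E (i + r) a) \<in> O(\<lambda>a. 1 / real a ^ 3)"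
      using even_power_sum_asymptotics[of "i + r"] unfolding E_def by simp
  qed
  ultimately show ?thesis by simp
qed

lemma lattice_moment_1_0:
  assumes "a \<ge> 1"
  shows "lattice_moment 1 0 a = 4 * real a / 3 - 1 / (3 * real a)"
proof -
  have "lattice_moment 1 0 a = 1 + 2 * (real a - power_sum 2 a / real a ^ 2)"
    unfolding lattice_moment_def
    by (subst sum_int_symmetric) (simp_all add: power_sum_def sum_subtractf power_divide sum_divide_distrib)
  also have "\<dots> = 4 * real a / 3 - 1 / (3 * real a)"
    using assms by (simp add: power_sum_two field_simps power2_eq_square power3_eq_cube)
  finally show ?thesis .
qed

section \<open>The Tsallis partition function and mean energy\<close>

lemma tsallis_sum_eq_lattice_moment:
  assumes "n \<ge> 1" and "a \<ge> 1"
  shows "(\<Sum>k\<in>{- (int a - 1)..int a - 1}. (real_of_int k) ^ (2 * r) * (1 - (real_of_int k) ^ 2 / (real a) ^ 2) ^ n)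
    = real a ^ (2 * r) * lattice_moment n r a"
proof -
  define g where "g k = (real_of_int k) ^ (2 * r) * (1 - (real_of_int k) ^ 2 / (real a) ^ 2) ^ n" for k
  have "(\<Sum>k\<in>{- (int a - 1)..int a - 1}. g k) = (\<Sum>k\<in>{- int a..int a}. g k)"
  proof (rule sum.mono_neutral_left)
    show "\<forall>k\<in>{- int a..int a} - {- (int a - 1)..int a - 1}. g k = 0"
    proof
      fix k assume "k \<in> {- int a..int a} - {- (int a - 1)..int a - 1}"
      then have "(real_of_int k) ^ 2 = (real a) ^ 2"
        by (auto simp: power2_eq_iff)
      then show "g k = 0" using assms by (simp add: g_def)
    qed
  qed auto
  also have "\<dots> = real a ^ (2 * r) * lattice_moment n r a"
    unfolding lattice_moment_def sum_distrib_left g_def using assms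
    by (intro sum.cong refl) (simp add: power_divide power_mult_distrib)
  finally show ?thesis by (simp add: g_def)
qed

lemma tsallis_f_eq_lattice_moment:
  assumes "n \<ge> 1" and "a \<ge> 1"
  shows "tsallis_f n a = lattice_moment n 0 a"
  using tsallis_sum_eq_lattice_moment[OF assms, of 0] by (simp add: tsallis_f_def)

lemma tsallis_U_eq_lattice_moment:
  assumes "n \<ge> 1" and "a \<ge> 1"
  shows "tsallis_U n a = real a ^ 2 * lattice_moment n 1 a / lattice_moment n 0 a"
proof -
  have "tsallis_U n a = (\<Sum>k\<in>{- (int a - 1)..int a - 1}.
      (real_of_int k) ^ 2 * (1 - (real_of_int k) ^ 2 / (real a) ^ 2) ^ n) / tsallis_f n a"
    unfolding tsallis_U_def tsallis_p_def sum_divide_distrib by (intro sum.cong refl) auto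
  then show ?thesis
    using tsallis_sum_eq_lattice_moment[OF assms, of 1] tsallis_f_eq_lattice_moment[OF assms] by simp
qed

lemma tsallis_f_asymptotics:
  assumes "n \<ge> 2"
  shows "(\<lambda>a. tsallis_f n a - 2 ^ (2 * n + 1) * (fact n) ^ 2 / fact (2 * n + 1) * real a)
    \<in> O(\<lambda>a. 1 / real a ^ 3)"
proof -
  have "eventually (\<lambda>a. tsallis_f n a - 2 ^ (2 * n + 1) * (fact n) ^ 2 / fact (2 * n + 1) * real a
      = lattice_moment n 0 a - 2 * real a * moment_integral n 0) at_top"
    using eventually_ge_at_top[of 1] unfolding moment_integral_0_closed_form [symmetric]
    by eventually_elim (use assms in \<open>simp add: tsallis_f_eq_lattice_moment\<close>)
  from landau_o.big.in_cong[OF this] show ?thesis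
    using lattice_moment_asymptotics[OF assms] by simp
qed

lemma tsallis_U_asymptotics:
  assumes "n \<ge> 2"
  shows "(\<lambda>a. tsallis_U n a - (real a) ^ 2 / (2 * real n + 3)) \<in> O(\<lambda>a. 1 / real a ^ 2)"
proof -
  define M0 where "M0 = lattice_moment n 0"
  define M1 where "M1 = lattice_moment n 1"
  define I where "I = moment_integral n 0"
  define N where "N a = real a ^ 2 * (M1 a - M0 a / (2 * real n + 3))" for a
  have I_pos: "I > 0" unfolding I_def by (rule moment_integral_0_pos)
  have M0_err: "(\<lambda>a. M0 a - 2 * real a * I) \<in> O(\<lambda>a. 1 / real a ^ 3)"
    unfolding M0_def I_def using lattice_moment_asymptotics[OF assms] .
  have N_bigo: "N \<in> O(\<lambda>a. 1 / real a)"
  proof -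
    have "(\<lambda>a. M1 a - M0 a / (2 * real n + 3))
        = (\<lambda>a. (M1 a - 2 * real a * moment_integral n 1) - (M0 a - 2 * real a * I) / (2 * real n + 3))"
      unfolding moment_integral_1 I_def by (simp add: diff_divide_distrib)
    also have "\<dots> \<in> O(\<lambda>a. 1 / real a ^ 3)"
    proof (rule sum_in_bigo(2))
      show "(\<lambda>a. M1 a - 2 * real a * moment_integral n 1) \<in> O(\<lambda>a. 1 / real a ^ 3)"
        unfolding M1_def by (rule lattice_moment_asymptotics[OF assms])
      have "2 * real n + 3 \<noteq> 0" by linarith
      with M0_err show "(\<lambda>a. (M0 a - 2 * real a * I) / (2 * real n + 3)) \<in> O(\<lambda>a. 1 / real a ^ 3)"
        by simp
    qed
    finally have "N \<in> O(\<lambda>a. real a ^ 2 * (1 / real a ^ 3))"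
      unfolding N_def by (rule landau_o.big.mult_left)
    also have "(\<lambda>a. real a ^ 2 * (1 / real a ^ 3)) \<in> O(\<lambda>a. 1 / real a)"
      by real_asymp
    finally show ?thesis .
  qed
  have "M0 \<sim>[at_top] (\<lambda>a. 2 * I * real a)"
  proof (rule smallo_imp_asymp_equiv)
    have "(\<lambda>a. 1 / real a ^ 3) \<in> o(\<lambda>a. real a)" by real_asymp
    with M0_err have "(\<lambda>a. M0 a - 2 * real a * I) \<in> o(\<lambda>a. real a)"
      by (rule landau_o.big_small_trans)
    then show "(\<lambda>a. M0 a - 2 * I * real a) \<in> o(\<lambda>a. 2 * I * real a)"
      using I_pos by (simp add: mult_ac)
  qed
  note M0_equiv = this
  have M0_nonzero: "eventually (\<lambda>a. M0 a \<noteq> 0) at_top"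
    using asymp_equiv_eventually_zeros[OF M0_equiv] eventually_gt_at_top[of 0]
    by eventually_elim (use I_pos in simp)
  have "(\<lambda>a. 2 * I * real a) \<in> O(M0)"
    by (rule asymp_equiv_imp_bigo[OF asymp_equiv_symI[OF M0_equiv]])
  then have M0_bigomega: "(\<lambda>a. real a) \<in> O(M0)"
    using I_pos by simp
  have "eventually (\<lambda>a. tsallis_U n a - (real a) ^ 2 / (2 * real n + 3) = N a / M0 a) at_top"
    using eventually_ge_at_top[of 1] M0_nonzero
    by eventually_elim
      (use assms in \<open>simp add: tsallis_U_eq_lattice_moment M0_def M1_def N_def field_simps\<close>)
  moreover have "(\<lambda>a. N a / M0 a) \<in> O(\<lambda>a. (1 / real a) / real a)"
    using M0_nonzero eventually_gt_at_top[of 0] N_bigo M0_bigomega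
    by (intro landau_o.big.divide) (auto elim: eventually_mono)
  ultimately show ?thesis
    by (simp add: landau_o.big.in_cong power2_eq_square)
qed

theorem theorem7:
  shows "(\<forall>a::nat. a \<ge> 1 \<longrightarrow> tsallis_f 1 a = 4 * real a / 3 - 1 / (3 * real a))
    \<and> (\<forall>n::nat. n \<ge> 2 \<longrightarrow>
           (\<lambda>a::nat. tsallis_f n a
              - 2 ^ (2*n+1) * (fact n)^2 / fact (2*n+1) * real a)
           \<in> o(\<lambda>a. 1 / (real a)^2))
    \<and> (\<forall>n::nat. n \<ge> 2 \<longrightarrow>
           (\<lambda>a::nat. tsallis_U n a - (real a)^2 / (real (2*n+1) + 2))
           \<in> o(\<lambda>a. 1 / real a))"
proof (intro conjI allI impI)
  fix a :: nat
  assume "a \<ge> 1"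
  then show "tsallis_f 1 a = 4 * real a / 3 - 1 / (3 * real a)"
    using tsallis_f_eq_lattice_moment[of 1 a] lattice_moment_1_0[of a] by simp
next
  fix n :: nat
  assume "n \<ge> 2"
  have "(\<lambda>a. 1 / real a ^ 3) \<in> o(\<lambda>a. 1 / (real a)^2)" by real_asymp
  with tsallis_f_asymptotics[OF \<open>n \<ge> 2\<close>]
  show "(\<lambda>a. tsallis_f n a - 2 ^ (2*n+1) * (fact n)^2 / fact (2*n+1) * real a) \<in> o(\<lambda>a. 1 / (real a)^2)"
    by (rule landau_o.big_small_trans)
next
  fix n :: nat
  assume "n \<ge> 2"
  have "(\<lambda>a. 1 / real a ^ 2) \<in> o(\<lambda>a. 1 / real a)" by real_asymp
  with tsallis_U_asymptotics[OF \<open>n \<ge> 2\<close>]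
  have "(\<lambda>a. tsallis_U n a - (real a)^2 / (2 * real n + 3)) \<in> o(\<lambda>a. 1 / real a)"
    by (rule landau_o.big_small_trans)
  moreover have "real (2*n+1) + 2 = 2 * real n + 3" by simp
  ultimately show "(\<lambda>a. tsallis_U n a - (real a)^2 / (real (2*n+1) + 2)) \<in> o(\<lambda>a. 1 / real a)"
    by (simp only:)
qed

end
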